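(* Let $a_c>b_c>0$, $k_e>0$, $a_e^2=a_c^2+k_e$, $b_e^2=b_c^2+k_e$, let $c$ be the ellipse $x^2/a_c^2+y^2/b_c^2=1$ and $e$ the ellipse $x^2/a_e^2+y^2/b_e^2=1$. Let $P_1P_2\dots P_N$ be an $N$-sided periodic billiard in $e$ with caustic $c$, let $Q_i$ be the contact point of $[P_i,P_{i+1}]$ with $c$, and put $l_i=\overline{P_iQ_i}$, $r_i=\overline{P_iQ_{i-1}}$ (indices modulo $N$). If $N=2n$, then $r_{i+n}=r_i$ and $l_{i+n}=l_i$ for all $i$. If $N=2n+1$, then $r_{i+n}=l_{i-1}$ and $l_{i+n}=r_i$ for all $i$; consequently, for odd $N$, $$\sum_{i=1}^N l_i=\sum_{i=1}^N r_i=\frac{L_e}{2},$$ where $L_e=\sum_{i=1}^N\overline{P_iP_{i+1}}$ is the perimeter of the billiard.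
   Context: A billiard in $e$ with caustic $c$ is a sequence $(P_i)_{i\in\mathbb Z}$ of points of $e$ with $P_{i+1}\neq P_i$ such that every line $[P_i,P_{i+1}]$ is tangent to $c$ and $[P_{i-1},P_i]\neq[P_i,P_{i+1}]$; it is $N$-sided periodic if $P_{i+N}=P_i$ for all $i$, $N$ being the least such positive integer. $\overline{XY}$ denotes Euclidean distance. *)

theory Defs
  imports "HOL-Analysis.Analysis"
begin

text \<open>Points of the plane are pairs of reals; dist on real * real is the Euclidean distance.\<close>

definition on_ellipse :: "real \<Rightarrow> real \<Rightarrow> real \<times> real \<Rightarrow> bool" where
  "on_ellipse a b X \<longleftrightarrow> (fst X)^2 / a^2 + (snd X)^2 / b^2 = 1"

definition line_through :: "real \<times> real \<Rightarrow> real \<times> real \<Rightarrow> (real \<times> real) set" where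
  "line_through A B = {X. \<exists>t::real. X = A + t *\<^sub>R (B - A)}"

text \<open>A line is tangent to the (convex) ellipse at Q iff it meets the ellipse exactly in Q.\<close>
definition tangent_at :: "real \<Rightarrow> real \<Rightarrow> (real \<times> real) set \<Rightarrow> real \<times> real \<Rightarrow> bool" where
  "tangent_at a b L Q \<longleftrightarrow> L \<inter> {X. on_ellipse a b X} = {Q}"

definition is_tangent :: "real \<Rightarrow> real \<Rightarrow> (real \<times> real) set \<Rightarrow> bool" where
  "is_tangent a b L \<longleftrightarrow> (\<exists>Q. tangent_at a b L Q)"

definition billiard :: "real \<Rightarrow> real \<Rightarrow> real \<Rightarrow> real \<Rightarrow> (int \<Rightarrow> real \<times> real) \<Rightarrow> bool" where
  "billiard ae be ac bc P \<longleftrightarrow>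
     (\<forall>i. on_ellipse ae be (P i)) \<and>
     (\<forall>i. P (i + 1) \<noteq> P i) \<and>
     (\<forall>i. is_tangent ac bc (line_through (P i) (P (i + 1)))) \<and>
     (\<forall>i. line_through (P (i - 1)) (P i) \<noteq> line_through (P i) (P (i + 1)))"

definition periodic_billiard :: "real \<Rightarrow> real \<Rightarrow> real \<Rightarrow> real \<Rightarrow> (int \<Rightarrow> real \<times> real) \<Rightarrow> nat \<Rightarrow> bool" where
  "periodic_billiard ae be ac bc P N \<longleftrightarrow>
     billiard ae be ac bc P \<and> N > 0 \<and> (\<forall>i. P (i + int N) = P i) \<and>
     (\<forall>m. 0 < m \<and> m < N \<longrightarrow> (\<exists>i. P (i + int m) \<noteq> P i))"

end

theory Submission
  imports Defs
begin

(* Parametrise the caustic by caustic_pt t = (ac cos t, bc sin t) and describe the billiard by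
  the contact angles th_i of its segments: P_i is the intersection of the tangents at th_(i-1)
  and th_i, at tangent parameter T_i = tan((th_i - th_(i-1))/2) on both, so l_i = T_i speed(th_i)
  and r_i = T_i speed(th_(i-1)), where speed = |caustic_pt'| is pi-periodic.
  The step th_(i-1) |-> th_i is a map next_angle k depending only on the confocal ellipse, and
  implicit differentiation gives next_angle' = speed(next_angle) / speed.  Hence in the
  coordinate phase = integral of dt/speed, which satisfies phase(t + pi) = phase(t) + H, the map
  is a translation by some D, and closing up after N steps means N D = 2 m H.
  For N = 2n this gives th_(i+n) = th_i + m pi, so the lengths repeat after n steps.
  For N = 2n + 1 the angle th_(i+n) - m pi lies half a step D/2 after th_(i-1), and the
  confocal ellipse whose translation is D/2 interlaces the two orbits.  Two of its steps
  x, x', x'' combine by the tangent addition formula into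
  tan((x'' - x)/2) = 2 kappa speed(x') / (alpha + beta - 1),
  which turns r_(i+n) into l_(i-1).  Summing l_i + r_(i+1) = |P_i P_(i+1)| gives the perimeter
  identity. *)

section \<open>Half-angle tangents and integer-indexed sequences\<close>

lemma cos_2arctan: "cos (2 * arctan T) = (1 - T^2) / (1 + T^2)"
proof -
  have "cos (2 * arctan T) = (cos (arctan T))^2 - (sin (arctan T))^2" by (simp add: cos_double)
  also have "\<dots> = (1 - T^2) / (1 + T^2)"
    unfolding cos_arctan sin_arctan by (simp add: power_divide diff_divide_distrib)
  finally show ?thesis .
qed

lemma sin_2arctan: "sin (2 * arctan T) = 2 * T / (1 + T^2)"
proof -
  have "sin (2 * arctan T) = 2 * sin (arctan T) * cos (arctan T)" by (simp add: sin_double)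
  also have "\<dots> = 2 * T / (1 + T^2)"
    unfolding cos_arctan sin_arctan by (simp add: field_simps add_pos_nonneg)
  finally show ?thesis .
qed

lemma cos_add_2arctan: "cos (t + 2 * arctan T) = (cos t * (1 - T^2) - 2 * sin t * T) / (1 + T^2)"
proof -
  have "cos t * ((1 - T^2) / (1 + T^2)) - sin t * (2 * T / (1 + T^2))
      = (cos t * (1 - T^2)) / (1 + T^2) - (2 * sin t * T) / (1 + T^2)"
    by (simp add: mult.commute mult.left_commute)
  then show ?thesis unfolding cos_add cos_2arctan sin_2arctan by (simp only: diff_divide_distrib)
qed

lemma sin_add_2arctan: "sin (t + 2 * arctan T) = (sin t * (1 - T^2) + 2 * cos t * T) / (1 + T^2)"
proof -
  have "sin t * ((1 - T^2) / (1 + T^2)) + cos t * (2 * T / (1 + T^2))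
      = (sin t * (1 - T^2)) / (1 + T^2) + (2 * cos t * T) / (1 + T^2)"
    by (simp add: mult.commute mult.left_commute)
  then show ?thesis unfolding sin_add cos_2arctan sin_2arctan by (simp only: add_divide_distrib)
qed

lemma pos_if_tan_half_pos:
  assumes "- pi < x" "x < pi" "tan (x / 2) > 0"
  shows "x > 0"
proof (rule ccontr)
  assume "\<not> x > 0"
  moreover have "x \<noteq> 0" using assms by auto
  ultimately have "tan (x / 2) < 0" using assms by (intro tan_less_zero) auto
  then show False using assms by simp
qed

lemma int_antidifference_exists:
  fixes f :: "int \<Rightarrow> 'a::ab_group_add"
  obtains F where "\<And>i. F i - F (i - 1) = f i"
proof
  define F where "F i = (if 0 \<le> i then (\<Sum>j\<in>{1..i}. f j) else - (\<Sum>j\<in>{i+1..0}. f j))" for i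
  show "F i - F (i - 1) = f i" for i
  proof (cases "1 \<le> i")
    case True
    then have "{1..i} = insert i {1..i-1}" by auto
    with True show ?thesis unfolding F_def by simp
  next
    case False
    then consider "i = 0" | "i < 0" by linarith
    then show ?thesis
    proof cases
      case 2
      then have "{i..0} = insert i {i+1..0}" by auto
      with 2 show ?thesis unfolding F_def by simp
    qed (simp add: F_def)
  qed
qed

lemma angle_lift_small_steps:
  fixes ph :: "int \<Rightarrow> real"
  obtains th where "\<And>i. cos (th i) = cos (ph i)" "\<And>i. sin (th i) = sin (ph i)"
    "\<And>i. \<bar>th i - th (i - 1)\<bar> \<le> pi"
proof -
  define rnd where "rnd i = round ((ph i - ph (i - 1)) / (2 * pi))" for i
  define del where "del i = ph i - ph (i - 1) - 2 * pi * of_int (rnd i)" for i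
  have del_bound: "\<bar>del i\<bar> \<le> pi" for i
  proof -
    have "\<bar>of_int (rnd i) - (ph i - ph (i - 1)) / (2 * pi)\<bar> \<le> 1/2"
      unfolding rnd_def by (rule of_int_round_abs_le)
    then have "\<bar>2 * pi * (of_int (rnd i) - (ph i - ph (i - 1)) / (2 * pi))\<bar> \<le> pi"
      by (simp add: abs_mult)
    moreover have "2 * pi * (of_int (rnd i) - (ph i - ph (i - 1)) / (2 * pi)) = - del i"
      unfolding del_def by (simp add: field_simps)
    ultimately show ?thesis by simp
  qed
  obtain F where F: "\<And>i. F i - F (i - 1) = del i" using int_antidifference_exists by blast
  define th where "th i = ph 0 - F 0 + F i" for i
  have th_step: "th i - th (i - 1) = del i" for i unfolding th_def using F[of i] by simp
  have "\<exists>q::int. th i = ph i + 2 * pi * of_int q" for i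
  proof (induction i rule: int_induct[where k = 0])
    case (step1 i)
    then obtain q :: int where "th i = ph i + 2 * pi * of_int q" by blast
    then have "th (i + 1) = ph (i + 1) + 2 * pi * of_int (q - rnd (i + 1))"
      using th_step[of "i + 1"] unfolding del_def by (simp add: algebra_simps)
    then show ?case by blast
  next
    case (step2 i)
    then obtain q :: int where "th i = ph i + 2 * pi * of_int q" by blast
    then have "th (i - 1) = ph (i - 1) + 2 * pi * of_int (q + rnd i)"
      using th_step[of i] unfolding del_def by (simp add: algebra_simps)
    then show ?case by blast
  qed (simp add: th_def)
  then have "cos (th i) = cos (ph i) \<and> sin (th i) = sin (ph i)" for i
    using sin_cos_eq_iff by metis
  then show ?thesis using that del_bound th_step by metis
qed

lemma sum_periodic_shift_one:
  fixes f :: "int \<Rightarrow> 'a::ab_group_add"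
  assumes periodic: "\<And>i. f (i + int N) = f i"
  shows "(\<Sum>i=1..int N. f (i + 1)) = (\<Sum>i=1..int N. f i)"
proof -
  have reindex: "(\<Sum>i=1..int N. g i) = (\<Sum>j<N. g (int j + 1))" for g :: "int \<Rightarrow> 'a"
    by (rule sum.reindex_bij_witness[where i="\<lambda>j. int j + 1" and j="\<lambda>i. nat (i - 1)"]) auto
  define h where "h j = f (int j + 1)" for j
  have "(\<Sum>i=1..int N. f (i + 1)) = (\<Sum>j<N. h (Suc j))" unfolding reindex h_def by (simp add: algebra_simps)
  also have "\<dots> = (\<Sum>j<N. h j) + h N - h 0" using sum.lessThan_Suc_shift[of h N] by simp
  also have "h N = h 0" unfolding h_def using periodic[of 1] by (simp add: algebra_simps)
  finally show ?thesis unfolding reindex h_def by simp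
qed

lemma sum_periodic_shift:
  fixes f :: "int \<Rightarrow> 'a::ab_group_add"
  assumes periodic: "\<And>i. f (i + int N) = f i"
  shows "(\<Sum>i=1..int N. f (i + c)) = (\<Sum>i=1..int N. f i)"
proof (induction c rule: int_induct[where k = 0])
  case (step1 c)
  have "(\<Sum>i=1..int N. f (i + 1 + c)) = (\<Sum>i=1..int N. f (i + c))"
    by (rule sum_periodic_shift_one[of "\<lambda>i. f (i + c)"]) (metis periodic add.commute add.left_commute)
  with step1 show ?case by (simp add: algebra_simps)
next
  case (step2 c)
  have "(\<Sum>i=1..int N. f (i + 1 + (c - 1))) = (\<Sum>i=1..int N. f (i + (c - 1)))"
    by (rule sum_periodic_shift_one[of "\<lambda>i. f (i + (c - 1))"]) (metis periodic add.commute add.left_commute)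
  with step2 show ?case by (simp add: algebra_simps)
qed simp

lemma periodic_sums_half_total:
  fixes l r s :: "int \<Rightarrow> 'a::field_char_0"
  assumes l_periodic: "\<And>i. l (i + int N) = l i" and r_periodic: "\<And>i. r (i + int N) = r i"
    and r_shift: "\<And>i. r (i + int n) = l (i - 1)"
    and s_split: "\<And>i. s i = l i + r (i + 1)"
  shows "(\<Sum>i=1..int N. l i) = (\<Sum>i=1..int N. s i) / 2"
    and "(\<Sum>i=1..int N. r i) = (\<Sum>i=1..int N. s i) / 2"
proof -
  have "(\<Sum>i=1..int N. r i) = (\<Sum>i=1..int N. r (i + int n))"
    by (rule sum_periodic_shift[of r, OF r_periodic, symmetric])
  also have "\<dots> = (\<Sum>i=1..int N. l (i + - 1))" unfolding r_shift by simp
  also have "\<dots> = (\<Sum>i=1..int N. l i)" by (rule sum_periodic_shift[of l, OF l_periodic])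
  finally have rl: "(\<Sum>i=1..int N. r i) = (\<Sum>i=1..int N. l i)" .
  have "(\<Sum>i=1..int N. s i) = (\<Sum>i=1..int N. l i) + (\<Sum>i=1..int N. r (i + 1))"
    unfolding s_split by (simp add: sum.distrib)
  also have "(\<Sum>i=1..int N. r (i + 1)) = (\<Sum>i=1..int N. r i)"
    by (rule sum_periodic_shift[of r, OF r_periodic])
  finally show "(\<Sum>i=1..int N. l i) = (\<Sum>i=1..int N. s i) / 2"
    and "(\<Sum>i=1..int N. r i) = (\<Sum>i=1..int N. s i) / 2" using rl by simp_all
qed

lemma int_sign_constant:
  fixes T :: "int \<Rightarrow> 'a::linordered_idom"
  assumes same_sign: "\<And>i. T i * T (i + 1) > 0"
  shows "(\<forall>i. T i > 0) \<or> (\<forall>i. T i < 0)"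
proof -
  have "0 < T 0 \<longleftrightarrow> 0 < T i" for i
  proof (induction i rule: int_induct[where k = 0])
    case (step1 i) then show ?case using same_sign[of i] by (auto simp: zero_less_mult_iff)
  next
    case (step2 i) then show ?case using same_sign[of "i - 1"] by (auto simp: zero_less_mult_iff)
  qed simp
  moreover have "T i \<noteq> 0" for i using same_sign[of i] by auto
  ultimately show ?thesis by (metis linorder_neqE_linordered_idom)
qed

definition half_step_tan :: "(int \<Rightarrow> real) \<Rightarrow> int \<Rightarrow> real" where
  "half_step_tan th i = tan ((th i - th (i - 1)) / 2)"

lemma half_step_tan_minus: "half_step_tan (\<lambda>i. - th i) i = - half_step_tan th i"
proof -
  have "(- th i - - th (i - 1)) / 2 = - ((th i - th (i - 1)) / 2)" by (simp add: field_simps)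
  then show ?thesis unfolding half_step_tan_def by (simp only: tan_minus)
qed

section \<open>Polars of an ellipse\<close>

text \<open>The symmetric bilinear form of the conic \<open>x\<^sup>2/a\<^sup>2 + y\<^sup>2/b\<^sup>2 = 1\<close>; the tangent at a point
  \<open>Q\<close> of the conic is the polar line \<open>{X. polar a b X Q = 1}\<close>.\<close>
definition polar :: "real \<Rightarrow> real \<Rightarrow> real \<times> real \<Rightarrow> real \<times> real \<Rightarrow> real" where
  "polar a b X Y = fst X * fst Y / a^2 + snd X * snd Y / b^2"

lemma on_ellipse_iff_polar_self: "on_ellipse a b X \<longleftrightarrow> polar a b X X = 1"
  unfolding on_ellipse_def polar_def by (simp add: power2_eq_square)

lemma tangent_at_unique: "tangent_at a b L Q \<Longrightarrow> tangent_at a b L Q' \<Longrightarrow> Q' = Q"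
  unfolding tangent_at_def by auto

lemma tangent_point_periodic:
  assumes "\<And>i. P (i + int N) = P i"
    and "\<And>i. tangent_at a b (line_through (P i) (P (i + 1))) (Q i)"
  shows "Q (i + int N) = Q i"
  using assms(2)[of "i + int N"] assms(2)[of i] assms(1)[of i] assms(1)[of "i + 1"]
  by (metis tangent_at_unique add.commute add.left_commute)

lemma tangent_at_polar:
  assumes a: "a \<noteq> 0" and b: "b \<noteq> 0" and AB: "A \<noteq> B"
    and tangent: "tangent_at a b (line_through A B) Q"
  shows "on_ellipse a b Q" "polar a b A Q = 1" "polar a b B Q = 1"
proof -
  have QL: "Q \<in> line_through A B" and QE: "on_ellipse a b Q"
    using tangent unfolding tangent_at_def by auto
  then show "on_ellipse a b Q" by blast
  obtain t0 where t0: "Q = A + t0 *\<^sub>R (B - A)" using QL unfolding line_through_def by auto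
  define d where "d = B - A"
  define qd where "qd = polar a b Q d"
  define dd where "dd = polar a b d d"
  have "fst d \<noteq> 0 \<or> snd d \<noteq> 0" using AB unfolding d_def by (auto simp: prod_eq_iff)
  then have dd: "dd > 0" unfolding dd_def polar_def using a b
    by (auto simp: add_pos_nonneg add_nonneg_pos power2_eq_square[symmetric])
  have QQ: "polar a b Q Q = 1" using QE on_ellipse_iff_polar_self by simp
  txt \<open>The second intersection of the line with the conic is \<open>Q + s d\<close>; tangency forces \<open>s = 0\<close>.\<close>
  define s where "s = - 2 * qd / dd"
  have "Q + s *\<^sub>R d \<in> line_through A B" unfolding line_through_def t0 d_def
    by (rule CollectI, rule exI[of _ "t0 + s"]) (simp add: algebra_simps scaleR_add_left)
  moreover have "on_ellipse a b (Q + s *\<^sub>R d)"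
  proof -
    have "polar a b (Q + s *\<^sub>R d) (Q + s *\<^sub>R d) = polar a b Q Q + 2 * s * qd + s^2 * dd"
      unfolding qd_def dd_def polar_def by (simp add: algebra_simps power2_eq_square add_divide_distrib)
    moreover have "2 * s * qd + s^2 * dd = 0" unfolding s_def using dd by (simp add: field_simps power2_eq_square)
    ultimately show ?thesis using QQ on_ellipse_iff_polar_self by simp
  qed
  ultimately have "Q + s *\<^sub>R d = Q" using tangent unfolding tangent_at_def by blast
  then have qd0: "qd = 0" unfolding s_def using dd AB d_def by simp
  have A: "A = Q - t0 *\<^sub>R d" unfolding t0 d_def by simp
  have "polar a b A Q = polar a b Q Q - t0 * qd"
    unfolding A qd_def polar_def by (simp add: algebra_simps diff_divide_distrib)
  then show "polar a b A Q = 1" using QQ qd0 by simp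
  have B: "B = Q + (1 - t0) *\<^sub>R d" unfolding t0 d_def by (simp add: algebra_simps)
  have "polar a b B Q = polar a b Q Q + (1 - t0) * qd"
    unfolding B qd_def polar_def using a b by (simp add: field_simps)
  then show "polar a b B Q = 1" using QQ qd0 by simp
qed

lemma common_normal_imp_parallel:
  fixes u d :: "real \<times> real"
  assumes n: "n1 \<noteq> 0 \<or> n2 \<noteq> 0" and d: "d \<noteq> 0"
    and un: "fst u * n1 + snd u * n2 = 0" and dn: "fst d * n1 + snd d * n2 = 0"
  obtains t where "u = t *\<^sub>R d"
proof -
  have "(snd u * fst d - fst u * snd d) * n2 = fst d * (fst u * n1 + snd u * n2) - fst u * (fst d * n1 + snd d * n2)"
    and "(snd u * fst d - fst u * snd d) * n1 = snd u * (fst d * n1 + snd d * n2) - snd d * (fst u * n1 + snd u * n2)"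
    by (simp_all add: algebra_simps)
  then have cross: "snd u * fst d = fst u * snd d" using n un dn by auto
  show ?thesis
  proof (cases "fst d = 0")
    case True
    then have "snd d \<noteq> 0" using d by (simp add: prod_eq_iff)
    then have "u = (snd u / snd d) *\<^sub>R d" using cross True by (simp add: prod_eq_iff field_simps)
    then show ?thesis by (rule that)
  next
    case False
    then have "u = (fst u / fst d) *\<^sub>R d" using cross by (simp add: prod_eq_iff field_simps)
    then show ?thesis by (rule that)
  qed
qed

lemma line_through_eq_polar:
  assumes AB: "A \<noteq> B" and PA: "polar a b A Q = 1" and PB: "polar a b B Q = 1"
  shows "line_through A B = {X. polar a b X Q = 1}"
proof (intro set_eqI iffI)
  fix X assume "X \<in> line_through A B"
  then obtain t where X: "X = A + t *\<^sub>R (B - A)" unfolding line_through_def by auto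
  have "polar a b X Q = polar a b A Q + t * (polar a b B Q - polar a b A Q)"
    unfolding X polar_def by (simp add: algebra_simps add_divide_distrib diff_divide_distrib)
  then show "X \<in> {X. polar a b X Q = 1}" using PA PB by simp
next
  fix X assume "X \<in> {X. polar a b X Q = 1}"
  then have PX: "polar a b X Q = 1" by simp
  define n1 where "n1 = fst Q / a^2"
  define n2 where "n2 = snd Q / b^2"
  have pl: "polar a b Y Q = fst Y * n1 + snd Y * n2" for Y unfolding polar_def n1_def n2_def by simp
  define u where "u = X - A"
  define d where "d = B - A"
  have un: "fst u * n1 + snd u * n2 = 0" using PX PA unfolding u_def pl by (simp add: algebra_simps)
  have dn: "fst d * n1 + snd d * n2 = 0" using PB PA unfolding d_def pl by (simp add: algebra_simps)
  have "n1 \<noteq> 0 \<or> n2 \<noteq> 0" using PA unfolding pl by auto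
  moreover have "d \<noteq> 0" using AB unfolding d_def by simp
  ultimately obtain t where "u = t *\<^sub>R d" using common_normal_imp_parallel un dn by blast
  then have "X = A + t *\<^sub>R (B - A)" unfolding u_def d_def by (simp add: algebra_simps)
  then show "X \<in> line_through A B" unfolding line_through_def by auto
qed

section \<open>Tangents of the caustic and confocal ellipses\<close>

locale caustic =
  fixes ac bc :: real
  assumes bc_pos: "0 < bc" and bc_less_ac: "bc < ac"
begin

lemma ac_pos: "0 < ac"
  using bc_pos bc_less_ac by simp

definition caustic_pt :: "real \<Rightarrow> real \<times> real" where
  "caustic_pt t = (ac * cos t, bc * sin t)"

text \<open>The point at parameter \<open>T\<close> on the tangent at \<open>caustic_pt t\<close>, measured along the velocity
  vector \<open>(- ac sin t, bc cos t)\<close>.\<close>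
definition tangent_pt :: "real \<Rightarrow> real \<Rightarrow> real \<times> real" where
  "tangent_pt t T = (ac * (cos t - sin t * T), bc * (sin t + cos t * T))"

definition speed :: "real \<Rightarrow> real" where
  "speed t = sqrt (ac^2 * (sin t)^2 + bc^2 * (cos t)^2)"

definition confocal :: "real \<Rightarrow> real \<times> real \<Rightarrow> bool" where
  "confocal k X \<longleftrightarrow> (fst X)^2 / (ac^2 + k) + (snd X)^2 / (bc^2 + k) = 1"

definition \<alpha> :: "real \<Rightarrow> real" where "\<alpha> k = ac^2 / (ac^2 + k)"
definition \<beta> :: "real \<Rightarrow> real" where "\<beta> k = bc^2 / (bc^2 + k)"
definition \<kappa> :: "real \<Rightarrow> real" where "\<kappa> k = sqrt (k / ((ac^2 + k) * (bc^2 + k)))"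

definition confocal_lead :: "real \<Rightarrow> real \<Rightarrow> real" where
  "confocal_lead k t = \<alpha> k * (sin t)^2 + \<beta> k * (cos t)^2"

abbreviation confocal_mid :: "real \<Rightarrow> real \<Rightarrow> real" where
  "confocal_mid k t \<equiv> sin t * cos t * (\<alpha> k - \<beta> k)"

definition confocal_poly :: "real \<Rightarrow> real \<Rightarrow> real \<Rightarrow> real" where
  "confocal_poly k t T = confocal_lead k t * T^2 - 2 * sin t * cos t * (\<alpha> k - \<beta> k) * T
     + (\<alpha> k * (cos t)^2 + \<beta> k * (sin t)^2 - 1)"

definition fwd_param :: "real \<Rightarrow> real \<Rightarrow> real" where
  "fwd_param k t = (confocal_mid k t + \<kappa> k * speed t) / confocal_lead k t"

text \<open>The tangent at \<open>caustic_pt t\<close> meets the confocal ellipse \<open>k\<close> in the forward direction at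
  \<open>tangent_pt t (fwd_param k t)\<close>; the other tangent from that point touches the caustic at
  \<open>caustic_pt (next_angle k t)\<close>.\<close>
definition next_angle :: "real \<Rightarrow> real \<Rightarrow> real" where
  "next_angle k t = t + 2 * arctan (fwd_param k t)"

lemma confocal_tangent_pt_iff:
  assumes k: "k > 0"
  shows "confocal k (tangent_pt t T) \<longleftrightarrow> confocal_poly k t T = 0"
proof -
  have "(fst (tangent_pt t T))^2 / (ac^2 + k) + (snd (tangent_pt t T))^2 / (bc^2 + k)
      = \<alpha> k * (cos t - sin t * T)^2 + \<beta> k * (sin t + cos t * T)^2"
    unfolding tangent_pt_def \<alpha>_def \<beta>_def by (simp add: power_mult_distrib)
  also have "\<dots> = confocal_poly k t T + 1"
    unfolding confocal_poly_def confocal_lead_def by (simp add: algebra_simps power2_eq_square)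
  finally show ?thesis unfolding confocal_def by simp
qed

lemma ac2_add_pos: "k > 0 \<Longrightarrow> ac^2 + k > 0"
  using ac_pos by (simp add: add_pos_pos)

lemma bc2_add_pos: "k > 0 \<Longrightarrow> bc^2 + k > 0"
  using bc_pos by (simp add: add_pos_pos)

lemma \<alpha>_bounds: "k > 0 \<Longrightarrow> 0 < \<alpha> k \<and> \<alpha> k < 1"
  using ac_pos ac2_add_pos[of k] by (auto simp: \<alpha>_def field_simps)

lemma \<beta>_bounds: "k > 0 \<Longrightarrow> 0 < \<beta> k \<and> \<beta> k < 1"
  using bc_pos bc2_add_pos[of k] by (auto simp: \<beta>_def field_simps)

lemma \<kappa>_pos: "k > 0 \<Longrightarrow> \<kappa> k > 0"
  using ac2_add_pos[of k] bc2_add_pos[of k] unfolding \<kappa>_def by (auto intro!: divide_pos_pos)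

lemma speed_sq: "(speed t)^2 = ac^2 * (sin t)^2 + bc^2 * (cos t)^2"
  unfolding speed_def by (simp add: add_nonneg_nonneg)

lemma speed_pos: "speed t > 0"
proof -
  have "bc^2 * (sin t)^2 \<le> ac^2 * (sin t)^2"
    using bc_less_ac bc_pos by (intro mult_right_mono power_mono) auto
  moreover have "bc^2 * (sin t)^2 + bc^2 * (cos t)^2 = bc^2"
    by (simp flip: distrib_left)
  moreover have "bc^2 > 0" using bc_pos by simp
  ultimately have "ac^2 * (sin t)^2 + bc^2 * (cos t)^2 > 0" by linarith
  then show ?thesis unfolding speed_def by simp
qed

lemma speed_pi_periodic: "speed (x + pi) = speed x"
  unfolding speed_def by simp

lemma speed_int_pi_periodic: "speed (x + of_int j * pi) = speed x"
proof -
  have "speed (x + real n * pi) = speed x" for x n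
    by (induction n arbitrary: x) (simp_all add: algebra_simps speed_pi_periodic flip: add.assoc)
  from this[of "x + of_int j * pi" "nat (- j)"] this[of x "nat j"] show ?thesis
    by (cases "j \<ge> 0") simp_all
qed

lemma speed_minus: "speed (- t) = speed t"
  unfolding speed_def by simp

lemma \<kappa>_speed_pos: "k > 0 \<Longrightarrow> \<kappa> k * speed t > 0"
  using \<kappa>_pos speed_pos by simp

lemma confocal_lead_pos: "k > 0 \<Longrightarrow> confocal_lead k t > 0"
proof -
  assume k: "k > 0"
  have "min (\<alpha> k) (\<beta> k) = min (\<alpha> k) (\<beta> k) * ((sin t)^2 + (cos t)^2)" by simp
  also have "\<dots> \<le> confocal_lead k t"
    unfolding confocal_lead_def distrib_left by (intro add_mono mult_right_mono) auto
  moreover have "min (\<alpha> k) (\<beta> k) > 0" using \<alpha>_bounds[OF k] \<beta>_bounds[OF k] by simp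
  ultimately show ?thesis by linarith
qed

lemma confocal_poly_const_neg: "k > 0 \<Longrightarrow> \<alpha> k * (cos t)^2 + \<beta> k * (sin t)^2 < 1"
proof -
  assume k: "k > 0"
  have "min (1 - \<alpha> k) (1 - \<beta> k) = min (1 - \<alpha> k) (1 - \<beta> k) * ((cos t)^2 + (sin t)^2)" by simp
  also have "\<dots> \<le> (1 - \<alpha> k) * (cos t)^2 + (1 - \<beta> k) * (sin t)^2"
    unfolding distrib_left by (intro add_mono mult_right_mono) auto
  also have "\<dots> = 1 - (\<alpha> k * (cos t)^2 + \<beta> k * (sin t)^2)"
    by (simp add: algebra_simps)
  moreover have "min (1 - \<alpha> k) (1 - \<beta> k) > 0" using \<alpha>_bounds[OF k] \<beta>_bounds[OF k] by simp
  ultimately show ?thesis by linarith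
qed

lemma \<kappa>_speed_sq: "k > 0 \<Longrightarrow> (\<kappa> k * speed t)^2 = confocal_lead k t - \<alpha> k * \<beta> k"
proof -
  assume k: "k > 0"
  define S where "S = (sin t)^2"
  define C where "C = (cos t)^2"
  have SC: "S + C = 1" by (simp add: S_def C_def)
  have nz: "ac^2 + k \<noteq> 0" "bc^2 + k \<noteq> 0" using ac2_add_pos[OF k] bc2_add_pos[OF k] by auto
  have lead: "confocal_lead k t = (ac^2 * S * (bc^2 + k) + bc^2 * C * (ac^2 + k)) / ((ac^2 + k) * (bc^2 + k))"
    unfolding confocal_lead_def \<alpha>_def \<beta>_def S_def C_def using nz by (simp add: field_simps)
  have "confocal_lead k t - \<alpha> k * \<beta> k
      = (ac^2 * S * (bc^2 + k) + bc^2 * C * (ac^2 + k) - ac^2 * bc^2) / ((ac^2 + k) * (bc^2 + k))"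
    unfolding lead by (simp add: \<alpha>_def \<beta>_def diff_divide_distrib)
  also have "ac^2 * S * (bc^2 + k) + bc^2 * C * (ac^2 + k) - ac^2 * bc^2
      = ac^2 * bc^2 * (S + C - 1) + k * (ac^2 * S + bc^2 * C)"
    by (simp add: algebra_simps)
  finally show ?thesis
    using SC k ac2_add_pos[OF k] bc2_add_pos[OF k]
    unfolding power_mult_distrib speed_sq \<kappa>_def S_def C_def by simp
qed

lemma confocal_discriminant:
  "k > 0 \<Longrightarrow> (\<kappa> k * speed t)^2 - (confocal_mid k t)^2
     = confocal_lead k t * (1 - \<alpha> k * (cos t)^2 - \<beta> k * (sin t)^2)"
proof -
  assume k: "k > 0"
  have "(a * s^2 + b * c^2) * (a * c^2 + b * s^2) = a * b + s^2 * c^2 * (a - b)^2"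
    if "c^2 + s^2 = 1" for a b c s :: real
  proof -
    have "(a * s^2 + b * c^2) * (a * c^2 + b * s^2) = a * b * (c^2 + s^2)^2 + s^2 * c^2 * (a - b)^2"
      by (simp add: algebra_simps power2_eq_square)
    with that show ?thesis by simp
  qed
  from this[of "cos t" "sin t" "\<alpha> k" "\<beta> k"]
  have "confocal_lead k t * (\<alpha> k * (cos t)^2 + \<beta> k * (sin t)^2)
      = \<alpha> k * \<beta> k + (confocal_mid k t)^2"
    unfolding confocal_lead_def by (simp add: power_mult_distrib)
  then show ?thesis using \<kappa>_speed_sq[OF k, of t] by (simp add: algebra_simps)
qed

lemma confocal_mid_less: "k > 0 \<Longrightarrow> \<bar>confocal_mid k t\<bar> < \<kappa> k * speed t"
proof -
  assume k: "k > 0"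
  have "confocal_lead k t * (1 - \<alpha> k * (cos t)^2 - \<beta> k * (sin t)^2) > 0"
    using confocal_lead_pos[OF k] confocal_poly_const_neg[OF k, of t] by simp
  then have "(\<bar>confocal_mid k t\<bar>)^2 < (\<kappa> k * speed t)^2"
    using confocal_discriminant[OF k, of t] by simp
  then show ?thesis
    using \<kappa>_speed_pos[OF k, of t] by (meson abs_ge_zero power2_less_imp_less less_imp_le)
qed

lemma confocal_poly_square:
  "k > 0 \<Longrightarrow> confocal_lead k t * confocal_poly k t T
     = (confocal_lead k t * T - confocal_mid k t)^2 - (\<kappa> k * speed t)^2"
proof -
  assume k: "k > 0"
  have "confocal_lead k t * confocal_poly k t T = (confocal_lead k t * T - confocal_mid k t)^2
      - (confocal_mid k t)^2 - confocal_lead k t * (1 - \<alpha> k * (cos t)^2 - \<beta> k * (sin t)^2)"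
    unfolding confocal_poly_def by (simp add: algebra_simps power2_eq_square)
  then show ?thesis using confocal_discriminant[OF k, of t] by simp
qed

lemma confocal_lead_fwd_param:
  "k > 0 \<Longrightarrow> confocal_lead k t * fwd_param k t = confocal_mid k t + \<kappa> k * speed t"
  unfolding fwd_param_def using confocal_lead_pos[of k t] by simp

lemma fwd_param_pos: "k > 0 \<Longrightarrow> fwd_param k t > 0"
  using confocal_mid_less[of k t] confocal_lead_pos[of k t] unfolding fwd_param_def
  by (simp add: abs_less_iff)

lemma confocal_poly_fwd_param: "k > 0 \<Longrightarrow> confocal_poly k t (fwd_param k t) = 0"
  using confocal_poly_square[of k t "fwd_param k t"] confocal_lead_fwd_param[of k t]
    confocal_lead_pos[of k t] by simp

lemma confocal_poly_root_cases:
  assumes k: "k > 0" and root: "confocal_poly k t T = 0"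
  shows "T = fwd_param k t \<or> confocal_lead k t * T = confocal_mid k t - \<kappa> k * speed t"
proof -
  have "(confocal_lead k t * T - confocal_mid k t)^2 = (\<kappa> k * speed t)^2"
    using confocal_poly_square[OF k, of t T] root by simp
  then have "confocal_lead k t * T = confocal_lead k t * fwd_param k t
      \<or> confocal_lead k t * T = confocal_mid k t - \<kappa> k * speed t"
    unfolding power2_eq_iff confocal_lead_fwd_param[OF k] by (auto simp: algebra_simps)
  then show ?thesis using confocal_lead_pos[OF k, of t] by auto
qed

lemma confocal_poly_pos_root_unique:
  assumes k: "k > 0" and pos: "T > 0" and root: "confocal_poly k t T = 0"
  shows "T = fwd_param k t"
proof -
  have "confocal_lead k t * T > 0" using confocal_lead_pos[OF k, of t] pos by simp
  moreover have "confocal_mid k t - \<kappa> k * speed t < 0"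
    using confocal_mid_less[OF k, of t] by (simp add: abs_less_iff)
  ultimately show ?thesis using confocal_poly_root_cases[OF k root] by auto
qed

lemma confocal_poly_next_angle:
  assumes k: "k > 0"
  shows "confocal_poly k (next_angle k t) (- fwd_param k t) = 0"
proof -
  define T where "T = fwd_param k t"
  define p where "p = 1 + T^2"
  define C' where "C' = cos t * (1 - T^2) - 2 * sin t * T"
  define S' where "S' = sin t * (1 - T^2) + 2 * cos t * T"
  have p: "p > 0" unfolding p_def by (simp add: add_pos_nonneg)
  have cs: "cos (next_angle k t) = C' / p" "sin (next_angle k t) = S' / p"
    unfolding next_angle_def T_def C'_def S'_def p_def by (simp_all add: cos_add_2arctan sin_add_2arctan)
  have "p^2 * confocal_poly k (next_angle k t) (- T)
      = (\<alpha> k * S'^2 + \<beta> k * C'^2) * T^2 + 2 * S' * C' * (\<alpha> k - \<beta> k) * T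
        + (\<alpha> k * C'^2 + \<beta> k * S'^2) - p^2"
    unfolding confocal_poly_def confocal_lead_def cs using p by (simp add: field_simps power2_eq_square)
  also have "\<dots> = p^2 * confocal_poly k t T"
  proof -
    have "(\<alpha> k * S'^2 + \<beta> k * C'^2) * T^2 + 2 * S' * C' * (\<alpha> k - \<beta> k) * T
        + (\<alpha> k * C'^2 + \<beta> k * S'^2) - p^2 * ((cos t)^2 + (sin t)^2)
        = p^2 * (confocal_lead k t * T^2 - 2 * sin t * cos t * (\<alpha> k - \<beta> k) * T
        + (\<alpha> k * (cos t)^2 + \<beta> k * (sin t)^2) - ((cos t)^2 + (sin t)^2))"
      unfolding p_def C'_def S'_def confocal_lead_def by (simp add: algebra_simps power2_eq_square)
    then show ?thesis unfolding confocal_poly_def by simp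
  qed
  also have "\<dots> = 0" unfolding T_def confocal_poly_fwd_param[OF k] by simp
  finally show ?thesis using p unfolding T_def by simp
qed

text \<open>The chord from the forward point back to the caustic arrives at \<open>next_angle k t\<close> with
  tangent parameter \<open>- fwd_param k t\<close>, i.e. at the other root of \<open>confocal_poly k (next_angle k t)\<close>.\<close>
lemma fwd_param_backward:
  assumes k: "k > 0"
  shows "\<kappa> k * speed (next_angle k t)
    = fwd_param k t * confocal_lead k (next_angle k t) + confocal_mid k (next_angle k t)"
proof -
  define s where "s = next_angle k t"
  from confocal_poly_root_cases[OF k confocal_poly_next_angle[OF k, of t]]
  have "- fwd_param k t = fwd_param k s \<or>
      confocal_lead k s * (- fwd_param k t) = confocal_mid k s - \<kappa> k * speed s"
    unfolding s_def .
  moreover have "- fwd_param k t \<noteq> fwd_param k s" using fwd_param_pos[OF k, of t] fwd_param_pos[OF k, of s] by simp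
  ultimately show ?thesis unfolding s_def by (simp add: algebra_simps)
qed

text \<open>The partial derivative of \<open>confocal_poly k t T\<close> in \<open>t\<close>, taken at \<open>T = fwd_param k t\<close>.\<close>
definition confocal_poly_dt :: "real \<Rightarrow> real \<Rightarrow> real" where
  "confocal_poly_dt k t = 2 * (\<alpha> k - \<beta> k) *
     (sin t * cos t * (fwd_param k t)^2 - ((cos t)^2 - (sin t)^2) * fwd_param k t - sin t * cos t)"

lemma fwd_param_differentiable:
  assumes k: "k > 0"
  obtains E where "(fwd_param k has_real_derivative E) (at t)"
proof -
  have "ac^2 * (sin t)^2 + bc^2 * (cos t)^2 > 0" using speed_pos[of t] unfolding speed_def by simp
  moreover have "\<alpha> k * (sin t)^2 + \<beta> k * (cos t)^2 \<noteq> 0"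
    using confocal_lead_pos[OF k, of t] unfolding confocal_lead_def by simp
  ultimately have "\<exists>E. (fwd_param k has_real_derivative E) (at t)"
    unfolding fwd_param_def[abs_def] speed_def confocal_lead_def
    by (auto intro!: exI derivative_eq_intros)
  with that show ?thesis by blast
qed

text \<open>Implicit differentiation of \<open>confocal_poly k t (fwd_param k t) = 0\<close>.\<close>
lemma fwd_param_deriv:
  assumes k: "k > 0"
  shows "(fwd_param k has_real_derivative - confocal_poly_dt k t / (2 * (\<kappa> k * speed t))) (at t)"
proof -
  obtain E where E: "(fwd_param k has_real_derivative E) (at t)"
    using fwd_param_differentiable[OF k] .
  have "((\<lambda>x. confocal_poly k x (fwd_param k x)) has_real_derivative
      confocal_poly_dt k t + E * (2 * confocal_lead k t * fwd_param k t - 2 * confocal_mid k t)) (at t)"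
    unfolding confocal_poly_def confocal_lead_def confocal_poly_dt_def
    by (auto intro!: derivative_eq_intros E simp: algebra_simps power2_eq_square)
  moreover have "((\<lambda>x. confocal_poly k x (fwd_param k x)) has_real_derivative 0) (at t)"
    using confocal_poly_fwd_param[OF k] by simp
  ultimately have "confocal_poly_dt k t + E * (2 * confocal_lead k t * fwd_param k t - 2 * confocal_mid k t) = 0"
    by (rule DERIV_unique)
  then have "confocal_poly_dt k t + E * (2 * (\<kappa> k * speed t)) = 0"
    using confocal_lead_fwd_param[OF k, of t] by (simp add: algebra_simps)
  then have "E * (2 * (\<kappa> k * speed t)) = - confocal_poly_dt k t" by linarith
  then have "E = - confocal_poly_dt k t / (2 * (\<kappa> k * speed t))"
    using \<kappa>_pos[OF k] speed_pos[of t] by (simp add: field_simps)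
  with E show ?thesis by simp
qed

lemma next_angle_deriv:
  assumes k: "k > 0"
  shows "(next_angle k has_real_derivative speed (next_angle k t) / speed t) (at t)"
proof -
  define T where "T = fwd_param k t"
  define p where "p = 1 + T^2"
  define C' where "C' = cos t * (1 - T^2) - 2 * sin t * T"
  define S' where "S' = sin t * (1 - T^2) + 2 * cos t * T"
  have p: "p > 0" unfolding p_def by (simp add: add_pos_nonneg)
  have D: "(next_angle k has_real_derivative
      1 + 2 * (inverse (1 + T^2) * (- confocal_poly_dt k t / (2 * (\<kappa> k * speed t))))) (at t)"
    unfolding next_angle_def[abs_def] T_def by (auto intro!: derivative_eq_intros fwd_param_deriv[OF k])
  have cs: "cos (next_angle k t) = C' / p" "sin (next_angle k t) = S' / p"
    unfolding next_angle_def T_def C'_def S'_def p_def by (simp_all add: cos_add_2arctan sin_add_2arctan)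
  have "\<kappa> k * speed (next_angle k t) = T * confocal_lead k (next_angle k t) + confocal_mid k (next_angle k t)"
    using fwd_param_backward[OF k, of t] unfolding T_def by simp
  also have "\<dots> = (T * (\<alpha> k * S'^2 + \<beta> k * C'^2) + S' * C' * (\<alpha> k - \<beta> k)) / p^2"
    unfolding confocal_lead_def cs using p by (simp add: field_simps power2_eq_square)
  also have "T * (\<alpha> k * S'^2 + \<beta> k * C'^2) + S' * C' * (\<alpha> k - \<beta> k)
      = ((T * confocal_lead k t - confocal_mid k t) * p - confocal_poly_dt k t) * p"
    unfolding confocal_poly_dt_def confocal_lead_def T_def p_def C'_def S'_def
    by (simp add: algebra_simps power2_eq_square)
  also have "T * confocal_lead k t - confocal_mid k t = \<kappa> k * speed t"
    using confocal_lead_fwd_param[OF k, of t] unfolding T_def by (simp add: algebra_simps)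
  finally have key: "\<kappa> k * speed (next_angle k t) = (\<kappa> k * speed t * p - confocal_poly_dt k t) / p"
    using p by (simp add: power2_eq_square)
  have "speed (next_angle k t) / speed t = \<kappa> k * speed (next_angle k t) / (\<kappa> k * speed t)"
    using \<kappa>_pos[OF k] by simp
  also have "\<dots> = 1 + 2 * (inverse p * (- confocal_poly_dt k t / (2 * (\<kappa> k * speed t))))"
    unfolding key using p \<kappa>_pos[OF k] speed_pos[of t] by (simp add: field_simps)
  finally show ?thesis using D unfolding p_def by simp
qed

lemma next_angle_bounds: "k > 0 \<Longrightarrow> x < next_angle k x \<and> next_angle k x < x + pi"
  unfolding next_angle_def using fwd_param_pos[of k x] arctan_ubound[of "fwd_param k x"] by simp

lemma tan_half_next_angle: "tan ((next_angle k x - x) / 2) = fwd_param k x"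
  unfolding next_angle_def by (simp add: tan_arctan)

lemma next_angle_unique:
  assumes k: "k > 0" and xy: "x < y" "y < x + pi" and on: "confocal k (tangent_pt x (tan ((y - x) / 2)))"
  shows "y = next_angle k x"
proof -
  have d: "0 < (y - x) / 2" "(y - x) / 2 < pi / 2" using xy by auto
  then have "tan ((y - x) / 2) > 0" by (simp add: tan_gt_zero)
  then have "tan ((y - x) / 2) = fwd_param k x"
    using confocal_poly_pos_root_unique[OF k] on confocal_tangent_pt_iff[OF k] by simp
  then have "arctan (fwd_param k x) = (y - x) / 2" using arctan_tan[of "(y - x) / 2"] d by simp
  then show ?thesis unfolding next_angle_def by simp
qed

end

section \<open>The phase coordinate\<close>

context caustic
begin

lemma speed_continuous: "isCont speed x"
  unfolding speed_def[abs_def] by (intro continuous_intros)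

lemma phase_exists: "\<exists>F. \<forall>x. (F has_real_derivative 1 / speed x) (at x)"
proof -
  have "\<exists>F. \<forall>x :: real. (-\<infinity>::ereal) < x \<longrightarrow> x < (\<infinity>::ereal) \<longrightarrow>
      (F has_vector_derivative (1 / speed x)) (at x)"
    by (rule einterval_antiderivative)
      (auto intro!: continuous_intros speed_continuous simp: speed_pos[THEN less_imp_neq, symmetric])
  then show ?thesis by (auto simp: has_real_derivative_iff_has_vector_derivative)
qed

text \<open>An antiderivative of \<open>1 / speed\<close>, an incomplete elliptic integral of the first kind.  In
  this coordinate every \<open>next_angle k\<close> is the translation by \<open>phase_shift k\<close>.\<close>
definition phase :: "real \<Rightarrow> real" where
  "phase = (SOME F. \<forall>x. (F has_real_derivative 1 / speed x) (at x))"

definition phase_shift :: "real \<Rightarrow> real" where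
  "phase_shift k = phase (next_angle k 0) - phase 0"

definition phase_half_turn :: real where
  "phase_half_turn = phase pi - phase 0"

lemma phase_deriv: "(phase has_real_derivative 1 / speed x) (at x)"
  using someI_ex[OF phase_exists] unfolding phase_def[symmetric] by blast

lemma phase_less:
  assumes "x < y"
  shows "phase x < phase y"
proof (rule DERIV_pos_imp_increasing[OF assms])
  show "\<exists>D. (phase has_real_derivative D) (at z) \<and> D > 0" for z
    using phase_deriv[of z] speed_pos[of z] by auto
qed

lemma phase_less_iff: "phase x < phase y \<longleftrightarrow> x < y"
  by (cases x y rule: linorder_cases) (auto dest: phase_less)

lemma phase_eq_iff: "phase x = phase y \<longleftrightarrow> x = y"
  by (cases x y rule: linorder_cases) (auto dest: phase_less)

lemma phase_continuous: "continuous_on S phase"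
  using phase_deriv by (meson DERIV_isCont continuous_at_imp_continuous_on)

lemma phase_diff_const:
  assumes "\<And>y. (g has_real_derivative speed (g y) / speed y) (at y)"
  shows "phase (g x) - phase x = phase (g 0) - phase 0"
proof -
  have "\<forall>y. ((\<lambda>x. phase (g x) - phase x) has_real_derivative 0) (at y)"
  proof
    fix y
    have "((\<lambda>x. phase (g x) - phase x) has_real_derivative
        1 / speed (g y) * (speed (g y) / speed y) - 1 / speed y) (at y)"
      by (auto intro!: derivative_eq_intros DERIV_chain2[OF phase_deriv] phase_deriv assms)
    then show "((\<lambda>x. phase (g x) - phase x) has_real_derivative 0) (at y)"
      using speed_pos[of "g y"] by simp
  qed
  from DERIV_isconst_all[OF this, of x 0] show ?thesis .
qed

lemma phase_next_angle: "k > 0 \<Longrightarrow> phase (next_angle k x) = phase x + phase_shift k"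
  using phase_diff_const[of "next_angle k" x] next_angle_deriv
  unfolding phase_shift_def by simp

lemma phase_shift_pos: "k > 0 \<Longrightarrow> phase_shift k > 0"
  unfolding phase_shift_def using next_angle_bounds[of k 0] phase_less by simp

lemma next_angle_iff_phase: "k > 0 \<Longrightarrow> next_angle k x = y \<longleftrightarrow> phase y = phase x + phase_shift k"
  using phase_next_angle[of k x] phase_eq_iff by metis

lemma phase_add_pi: "phase (x + pi) = phase x + phase_half_turn"
proof -
  have "((\<lambda>x. x + pi) has_real_derivative speed (y + pi) / speed y) (at y)" for y
    using speed_pi_periodic[of y] speed_pos[of y] by (auto intro!: derivative_eq_intros)
  from phase_diff_const[of "\<lambda>x. x + pi" x, OF this] show ?thesis
    unfolding phase_half_turn_def by simp
qed

lemma phase_add_int_pi: "phase (x + of_int j * pi) = phase x + of_int j * phase_half_turn"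
proof -
  have nat: "phase (x + real n * pi) = phase x + real n * phase_half_turn" for x n
  proof (induction n)
    case (Suc n)
    have "x + real (Suc n) * pi = (x + real n * pi) + pi" by (simp add: algebra_simps)
    then have "phase (x + real (Suc n) * pi) = phase (x + real n * pi) + phase_half_turn"
      by (simp only: phase_add_pi)
    with Suc show ?case by (simp add: algebra_simps)
  qed simp
  show ?thesis
  proof (cases "j \<ge> 0")
    case True
    then show ?thesis using nat[of x "nat j"] by simp
  next
    case False
    then show ?thesis using nat[of "x + of_int j * pi" "nat (- j)"] by simp
  qed
qed

end

section \<open>Tangent points and contact angles\<close>

context caustic
begin

lemma caustic_pt_eq_tangent_pt: "caustic_pt t = tangent_pt t 0"
  unfolding caustic_pt_def tangent_pt_def by simp

lemma caustic_pt_minus: "caustic_pt (- t) = (fst (caustic_pt t), - snd (caustic_pt t))"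
  unfolding caustic_pt_def by simp

lemma tangent_pt_minus: "tangent_pt (- t) (- T) = (fst (tangent_pt t T), - snd (tangent_pt t T))"
  unfolding tangent_pt_def by (simp add: algebra_simps)

lemma confocal_reflect: "confocal k (fst X, - snd X) \<longleftrightarrow> confocal k X"
  unfolding confocal_def by simp

lemma dist_tangent_pt: "dist (tangent_pt t T1) (tangent_pt t T2) = \<bar>T1 - T2\<bar> * speed t"
proof -
  have "dist (tangent_pt t T1) (tangent_pt t T2)
      = sqrt ((ac * sin t * (T1 - T2))^2 + (bc * cos t * (T1 - T2))^2)"
    unfolding tangent_pt_def dist_Pair_Pair dist_real_def by (simp add: algebra_simps power2_commute)
  also have "(ac * sin t * (T1 - T2))^2 + (bc * cos t * (T1 - T2))^2 = (T1 - T2)^2 * (speed t)^2"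
    unfolding speed_sq by (simp add: algebra_simps power2_eq_square)
  also have "sqrt \<dots> = \<bar>T1 - T2\<bar> * speed t" using speed_pos[of t] by (simp add: real_sqrt_mult)
  finally show ?thesis .
qed

lemma on_ellipse_caustic_pt:
  assumes "on_ellipse ac bc X"
  obtains t where "X = caustic_pt t"
proof -
  have "(fst X / ac)^2 + (snd X / bc)^2 = 1"
    using assms unfolding on_ellipse_def by (simp add: power_divide)
  then obtain t where "fst X / ac = cos t" "snd X / bc = sin t" using sincos_total_2pi by metis
  then have "X = caustic_pt t" unfolding caustic_pt_def using ac_pos bc_pos by (simp add: prod_eq_iff field_simps)
  then show ?thesis using that by blast
qed

lemma polar_caustic_pt: "polar ac bc X (caustic_pt t) = fst X * cos t / ac + snd X * sin t / bc"
  unfolding polar_def caustic_pt_def using ac_pos bc_pos by (simp add: power2_eq_square)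

lemma polar_tangent_pt: "polar ac bc (tangent_pt a T) (caustic_pt a) = 1"
proof -
  have "polar ac bc (tangent_pt a T) (caustic_pt a) = (cos a - sin a * T) * cos a + (sin a + cos a * T) * sin a"
    unfolding polar_caustic_pt tangent_pt_def using ac_pos bc_pos by simp
  also have "\<dots> = (sin a)^2 + (cos a)^2" by (simp add: algebra_simps power2_eq_square)
  finally show ?thesis by simp
qed

lemma tangent_pt_half_angle:
  assumes cd: "cos d \<noteq> 0"
  shows "tangent_pt (a + 2 * d) (- tan d) = tangent_pt a (tan d)"
proof -
  have c2: "cos (a + 2 * d) = cos a * ((cos d)^2 - (sin d)^2) - sin a * (2 * sin d * cos d)"
    by (simp add: cos_add cos_double sin_double)
  have s2: "sin (a + 2 * d) = sin a * ((cos d)^2 - (sin d)^2) + cos a * (2 * sin d * cos d)"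
    by (simp add: sin_add cos_double sin_double)
  have flip: "(ca * (cd^2 - sd^2) - sa * (2 * sd * cd)) + (sa * (cd^2 - sd^2) + ca * (2 * sd * cd)) * T = ca - sa * T"
    "(sa * (cd^2 - sd^2) + ca * (2 * sd * cd)) - (ca * (cd^2 - sd^2) - sa * (2 * sd * cd)) * T = sa + ca * T"
    if h: "cd^2 + sd^2 = 1" and cd: "cd \<noteq> 0" and T: "T = sd / cd" for ca sa cd sd T :: real
  proof -
    have "(ca * (cd^2 - sd^2) - sa * (2 * sd * cd)) * cd + (sa * (cd^2 - sd^2) + ca * (2 * sd * cd)) * sd
        = (ca * cd - sa * sd) * (cd^2 + sd^2)"
      and "(sa * (cd^2 - sd^2) + ca * (2 * sd * cd)) * cd - (ca * (cd^2 - sd^2) - sa * (2 * sd * cd)) * sd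
        = (sa * cd + ca * sd) * (cd^2 + sd^2)"
      by (simp_all add: algebra_simps power2_eq_square)
    then show "(ca * (cd^2 - sd^2) - sa * (2 * sd * cd)) + (sa * (cd^2 - sd^2) + ca * (2 * sd * cd)) * T = ca - sa * T"
      "(sa * (cd^2 - sd^2) + ca * (2 * sd * cd)) - (ca * (cd^2 - sd^2) - sa * (2 * sd * cd)) * T = sa + ca * T"
      unfolding T h using cd by (simp_all add: field_simps)
  qed
  have h: "(cos d)^2 + (sin d)^2 = 1" by simp
  have T: "tan d = sin d / cos d" by (simp add: tan_def)
  show ?thesis unfolding tangent_pt_def c2 s2
    using flip[OF h cd T, where ca = "cos a" and sa = "sin a"] by simp
qed

lemma polar_eq_unique:
  assumes s: "sin (b - a) \<noteq> 0"
    and X: "polar ac bc X (caustic_pt a) = 1" "polar ac bc X (caustic_pt b) = 1"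
    and Y: "polar ac bc Y (caustic_pt a) = 1" "polar ac bc Y (caustic_pt b) = 1"
  shows "X = Y"
proof -
  define u1 where "u1 = (fst X - fst Y) / ac"
  define u2 where "u2 = (snd X - snd Y) / bc"
  have g: "u1 * cos c + u2 * sin c = polar ac bc X (caustic_pt c) - polar ac bc Y (caustic_pt c)" for c
    unfolding polar_caustic_pt u1_def u2_def by (simp add: diff_divide_distrib algebra_simps)
  have e1: "u1 * cos a + u2 * sin a = 0" using X(1) Y(1) g[of a] by simp
  have e2: "u1 * cos b + u2 * sin b = 0" using X(2) Y(2) g[of b] by simp
  have d: "sin (b - a) = sin b * cos a - cos b * sin a" by (simp add: sin_diff)
  have "u1 * sin (b - a) = sin b * (u1 * cos a + u2 * sin a) - sin a * (u1 * cos b + u2 * sin b)"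
    unfolding d by (simp add: algebra_simps)
  then have "u1 = 0" using e1 e2 s by simp
  moreover have "u2 * sin (b - a) = cos a * (u1 * cos b + u2 * sin b) - cos b * (u1 * cos a + u2 * sin a)"
    unfolding d by (simp add: algebra_simps)
  then have "u2 = 0" using e1 e2 s by simp
  ultimately show ?thesis unfolding u1_def u2_def using ac_pos bc_pos by (simp add: prod_eq_iff)
qed

lemma polar_both_eq_tangent_pt:
  assumes s: "sin (b - a) \<noteq> 0" and c: "cos ((b - a) / 2) \<noteq> 0"
    and X: "polar ac bc X (caustic_pt a) = 1" "polar ac bc X (caustic_pt b) = 1"
  shows "X = tangent_pt a (tan ((b - a) / 2))" "X = tangent_pt b (- tan ((b - a) / 2))"
proof -
  have ab: "a + 2 * ((b - a) / 2) = b" by (simp add: field_simps)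
  have flip: "tangent_pt b (- tan ((b - a) / 2)) = tangent_pt a (tan ((b - a) / 2))"
    using tangent_pt_half_angle[OF c, of a] unfolding ab .
  have "polar ac bc (tangent_pt a (tan ((b - a) / 2))) (caustic_pt b) = 1"
    using polar_tangent_pt[of b "- tan ((b - a) / 2)"] unfolding flip .
  then show "X = tangent_pt a (tan ((b - a) / 2))"
    by (rule polar_eq_unique[OF s X polar_tangent_pt])
  then show "X = tangent_pt b (- tan ((b - a) / 2))" unfolding flip .
qed

lemma confocal_tangent_params_opposite:
  assumes k: "k > 0" and x: "confocal k (tangent_pt t x)" and y: "confocal k (tangent_pt t y)"
    and xy: "x \<noteq> y"
  shows "x * y < 0"
proof -
  have px: "confocal_poly k t x = 0" and py: "confocal_poly k t y = 0"
    using x y confocal_tangent_pt_iff[OF k] by auto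
  have "confocal_poly k t x - confocal_poly k t y
      = (x - y) * (confocal_lead k t * (x + y) - 2 * confocal_mid k t)"
    unfolding confocal_poly_def by (simp add: algebra_simps power2_eq_square)
  then have sum: "confocal_lead k t * (x + y) = 2 * confocal_mid k t" using px py xy by simp
  have "confocal_lead k t * x^2 - 2 * confocal_mid k t * x + (\<alpha> k * (cos t)^2 + \<beta> k * (sin t)^2 - 1) = 0"
    using px unfolding confocal_poly_def by (simp add: algebra_simps)
  then have "confocal_lead k t * (x * y) = \<alpha> k * (cos t)^2 + \<beta> k * (sin t)^2 - 1"
    unfolding sum[symmetric] by (simp add: algebra_simps power2_eq_square)
  then have "x * y = (\<alpha> k * (cos t)^2 + \<beta> k * (sin t)^2 - 1) / confocal_lead k t"
    using confocal_lead_pos[OF k, of t] by (simp add: field_simps)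
  then show ?thesis using confocal_poly_const_neg[OF k, of t] confocal_lead_pos[OF k, of t]
    by (simp add: divide_neg_pos)
qed

text \<open>Vieta's formulas for \<open>confocal_poly k y\<close>, whose roots are \<open>- fwd_param k x\<close> and \<open>fwd_param k y\<close>.\<close>
lemma fwd_param_consecutive:
  assumes k: "k > 0" and y: "y = next_angle k x"
  shows "fwd_param k x + fwd_param k y = 2 * (\<kappa> k * speed y) / confocal_lead k y"
    and "1 - fwd_param k x * fwd_param k y = (\<alpha> k + \<beta> k - 1) / confocal_lead k y"
proof -
  have W: "confocal_lead k y > 0" using confocal_lead_pos[OF k] .
  have T1: "fwd_param k x = (\<kappa> k * speed y - confocal_mid k y) / confocal_lead k y"
    using fwd_param_backward[OF k, of x] W unfolding y[symmetric] by (simp add: field_simps)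
  have T2: "fwd_param k y = (confocal_mid k y + \<kappa> k * speed y) / confocal_lead k y"
    using confocal_lead_fwd_param[OF k, of y] W by (simp add: field_simps)
  show "fwd_param k x + fwd_param k y = 2 * (\<kappa> k * speed y) / confocal_lead k y"
    unfolding T1 T2 using W by (simp add: field_simps)
  have "fwd_param k x * fwd_param k y = ((\<kappa> k * speed y)^2 - (confocal_mid k y)^2) / (confocal_lead k y)^2"
    unfolding T1 T2 using W by (simp add: field_simps power2_eq_square)
  also have "\<dots> = (1 - \<alpha> k * (cos y)^2 - \<beta> k * (sin y)^2) / confocal_lead k y"
    unfolding confocal_discriminant[OF k] using W by (simp add: power2_eq_square)
  finally have p: "fwd_param k x * fwd_param k y = (1 - \<alpha> k * (cos y)^2 - \<beta> k * (sin y)^2) / confocal_lead k y" .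
  have "confocal_lead k y - (1 - \<alpha> k * (cos y)^2 - \<beta> k * (sin y)^2) = \<alpha> k + \<beta> k - 1"
    unfolding confocal_lead_def by (simp add: algebra_simps flip: distrib_left)
  then show "1 - fwd_param k x * fwd_param k y = (\<alpha> k + \<beta> k - 1) / confocal_lead k y"
    unfolding p using W by (simp add: field_simps)
qed

lemma tan_half_two_steps:
  assumes k: "k > 0" and y: "y = next_angle k x" and z: "z = next_angle k y" and zx: "z - x < pi"
  shows "tan ((z - x) / 2) = 2 * (\<kappa> k * speed y) / (\<alpha> k + \<beta> k - 1)"
proof -
  have b1: "x < y" "y < x + pi" using next_angle_bounds[OF k, of x] y by auto
  have b2: "y < z" "z < y + pi" using next_angle_bounds[OF k, of y] z by auto
  define d1 where "d1 = (y - x) / 2"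
  define d2 where "d2 = (z - y) / 2"
  have "cos d1 \<noteq> 0" "cos d2 \<noteq> 0" "cos (d1 + d2) \<noteq> 0"
    using b1 b2 zx unfolding d1_def d2_def
    by (intro cos_gt_zero_pi[THEN less_imp_neq, symmetric]; simp add: field_simps)+
  then have "tan (d1 + d2) = (tan d1 + tan d2) / (1 - tan d1 * tan d2)"
    by (rule tan_add)
  also have "\<dots> = (2 * (\<kappa> k * speed y) / confocal_lead k y) / ((\<alpha> k + \<beta> k - 1) / confocal_lead k y)"
    unfolding d1_def d2_def y z tan_half_next_angle fwd_param_consecutive[OF k refl] ..
  also have "\<dots> = 2 * (\<kappa> k * speed y) / (\<alpha> k + \<beta> k - 1)"
    using confocal_lead_pos[OF k, of y] by simp
  also have "d1 + d2 = (z - x) / 2" unfolding d1_def d2_def by (simp add: field_simps)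
  finally show ?thesis .
qed

lemma confocal_through_tangent_pt:
  assumes T: "T \<noteq> 0"
  obtains k where "k > 0" "confocal k (tangent_pt t T)"
proof -
  define X where "X = tangent_pt t T"
  define f where "f k = (fst X)^2 / (ac^2 + k) + (snd X)^2 / (bc^2 + k)" for k
  define K where "K = (fst X)^2 + (snd X)^2 + 1"
  have K: "K > 0" unfolding K_def by (simp add: add_nonneg_pos)
  have f0: "f 0 = 1 + T^2"
  proof -
    have circ: "(c - s * T)^2 + (s + c * T)^2 = (c^2 + s^2) * (1 + T^2)" for c s :: real
      by (simp add: algebra_simps power2_eq_square)
    have "f 0 = (cos t - sin t * T)^2 + (sin t + cos t * T)^2"
      unfolding f_def X_def tangent_pt_def using ac_pos bc_pos by (simp add: power_mult_distrib)
    also have "\<dots> = ((cos t)^2 + (sin t)^2) * (1 + T^2)" by (rule circ)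
    finally show ?thesis by simp
  qed
  have fK: "f K \<le> 1"
  proof -
    have "(fst X)^2 / (ac^2 + K) \<le> (fst X)^2 / K" "(snd X)^2 / (bc^2 + K) \<le> (snd X)^2 / K"
      using K by (auto intro!: divide_left_mono mult_pos_pos add_nonneg_pos)
    moreover have "(fst X)^2 / K + (snd X)^2 / K \<le> 1"
      using K unfolding K_def by (simp add: add_divide_distrib[symmetric])
    ultimately show ?thesis unfolding f_def by linarith
  qed
  have "0 < ac^2 + x" "0 < bc^2 + x" if "0 \<le> x" for x
    using that ac_pos bc_pos by (simp_all add: add_pos_nonneg)
  then have "continuous_on {0..K} f" unfolding f_def by (intro continuous_intros) force+
  moreover have "1 \<le> f 0" unfolding f0 by simp
  ultimately obtain k where k: "0 \<le> k" "f k = 1"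
    using IVT2'[of f K 1 0] fK K by auto
  moreover have "k \<noteq> 0" using k f0 T by auto
  ultimately have "k > 0" by simp
  moreover have "confocal k (tangent_pt t T)" using k(2) unfolding confocal_def f_def X_def .
  ultimately show ?thesis by (rule that)
qed

lemma half_phase_shift_exists:
  assumes k: "k > 0"
  obtains k' where "k' > 0" "phase_shift k' = phase_shift k / 2"
proof -
  define D where "D = phase_shift k"
  have D: "D > 0" unfolding D_def using phase_shift_pos[OF k] .
  have "phase 0 \<le> phase 0 + D / 2" "phase 0 + D / 2 \<le> phase (next_angle k 0)" "0 \<le> next_angle k 0"
    using D phase_next_angle[OF k, of 0] next_angle_bounds[OF k, of 0] unfolding D_def by auto
  then obtain c where c: "phase c = phase 0 + D / 2" "c \<le> next_angle k 0"
    using IVT'[of phase 0 "phase 0 + D / 2" "next_angle k 0", OF _ _ _ phase_continuous] by blast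
  then have c_bounds: "0 < c" "c < pi"
    using D phase_less_iff[of 0 c] phase_less_iff[of c "next_angle k 0"] next_angle_bounds[OF k, of 0]
      phase_next_angle[OF k, of 0]
    unfolding D_def by auto
  then have "tan ((c - 0) / 2) > 0" by (intro tan_gt_zero) auto
  then obtain k' where k': "k' > 0" "confocal k' (tangent_pt 0 (tan ((c - 0) / 2)))"
    using confocal_through_tangent_pt[of "tan ((c - 0) / 2)" 0] by auto
  then have "c = next_angle k' 0" using c_bounds by (intro next_angle_unique) auto
  then have "phase_shift k' = D / 2" using c(1) unfolding phase_shift_def by simp
  with k' show ?thesis using that unfolding D_def by blast
qed

text \<open>The lengths \<open>l\<^sub>i = |P\<^sub>i Q\<^sub>i|\<close> and \<open>r\<^sub>i = |P\<^sub>i Q\<^sub>i\<^sub>-\<^sub>1|\<close> in terms of the contact angles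
  (see \<open>billiard_orbit_exists\<close>).\<close>
definition l_len :: "(int \<Rightarrow> real) \<Rightarrow> int \<Rightarrow> real" where
  "l_len th i = half_step_tan th i * speed (th i)"

definition r_len :: "(int \<Rightarrow> real) \<Rightarrow> int \<Rightarrow> real" where
  "r_len th i = half_step_tan th i * speed (th (i - 1))"

text \<open>Equal contact points would put both segments on one tangent, and antipodal ones have
  parallel tangents, which cannot both pass through \<open>B\<close>.\<close>
lemma contact_angle_sin_diff_nonzero:
  assumes AB: "A \<noteq> B" and BC: "B \<noteq> C"
    and lines: "line_through A B \<noteq> line_through B C"
    and tAB: "tangent_at ac bc (line_through A B) (caustic_pt a)"
    and tBC: "tangent_at ac bc (line_through B C) (caustic_pt b)"
  shows "sin (b - a) \<noteq> 0"
proof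
  assume s0: "sin (b - a) = 0"
  have nz: "ac \<noteq> 0" "bc \<noteq> 0" using ac_pos bc_pos by auto
  note polar_a = tangent_at_polar[OF nz AB tAB] and polar_b = tangent_at_polar[OF nz BC tBC]
  define lam where "lam = cos (b - a)"
  have "lam^2 = 1" unfolding lam_def using s0 sin_cos_squared_add[of "b - a"] by simp
  then have "lam = 1 \<or> lam = -1" by (simp add: power2_eq_1_iff)
  moreover have "caustic_pt a = lam *\<^sub>R caustic_pt b"
    using cos_diff[of b "b - a"] sin_diff[of b "b - a"] s0 unfolding lam_def caustic_pt_def by simp
  ultimately show False
  proof (elim disjE)
    assume "lam = 1" "caustic_pt a = lam *\<^sub>R caustic_pt b"
    then have "line_through A B = line_through B C"
      using line_through_eq_polar[OF AB polar_a(2,3)] line_through_eq_polar[OF BC polar_b(2,3)] by simp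
    with lines show False ..
  next
    assume "lam = -1" "caustic_pt a = lam *\<^sub>R caustic_pt b"
    then have "polar ac bc B (caustic_pt a) = - polar ac bc B (caustic_pt b)" unfolding polar_def by simp
    with polar_a(3) polar_b(2) show False by simp
  qed
qed

lemma contact_angles:
  assumes neq: "\<And>i. P (i + 1) \<noteq> P i"
    and lines: "\<And>i. line_through (P (i - 1)) (P i) \<noteq> line_through (P i) (P (i + 1))"
    and tangent: "\<And>i. tangent_at ac bc (line_through (P i) (P (i + 1))) (Q i)"
  obtains th where "\<And>i. Q i = caustic_pt (th i)" "\<And>i. \<bar>th i - th (i - 1)\<bar> < pi"
    "\<And>i. P i = tangent_pt (th (i - 1)) (half_step_tan th i)"
    "\<And>i. P i = tangent_pt (th i) (- half_step_tan th i)"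
proof -
  have nz: "ac \<noteq> 0" "bc \<noteq> 0" using ac_pos bc_pos by auto
  have "\<exists>t. Q i = caustic_pt t" for i
    using on_ellipse_caustic_pt[OF tangent_at_polar(1)[OF nz neq[of i, symmetric] tangent[of i]]] by blast
  then obtain ph where "\<And>i. Q i = caustic_pt (ph i)" by metis
  moreover obtain th where "\<And>i. cos (th i) = cos (ph i)" "\<And>i. sin (th i) = sin (ph i)"
    and step_le: "\<And>i. \<bar>th i - th (i - 1)\<bar> \<le> pi"
    using angle_lift_small_steps[of ph] by blast
  ultimately have Q: "Q i = caustic_pt (th i)" for i unfolding caustic_pt_def by simp
  have sin_ne: "sin (th i - th (i - 1)) \<noteq> 0" for i
  proof (rule contact_angle_sin_diff_nonzero)
    show "P (i - 1) \<noteq> P i" using neq[of "i - 1"] by simp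
    show "tangent_at ac bc (line_through (P (i - 1)) (P i)) (caustic_pt (th (i - 1)))"
      using tangent[of "i - 1"] unfolding Q by simp
  qed (use neq[of i] lines[of i] tangent[of i] Q in auto)
  have step_lt: "\<bar>th i - th (i - 1)\<bar> < pi" for i
  proof (rule ccontr)
    assume "\<not> \<bar>th i - th (i - 1)\<bar> < pi"
    then have "th i - th (i - 1) = pi \<or> th i - th (i - 1) = - pi" using step_le[of i] by linarith
    then show False using sin_ne[of i] by auto
  qed
  have "cos ((th i - th (i - 1)) / 2) \<noteq> 0" for i
    using step_lt[of i] by (intro cos_gt_zero_pi[THEN less_imp_neq, symmetric]) auto
  moreover have "polar ac bc (P i) (caustic_pt (th (i - 1))) = 1" "polar ac bc (P i) (caustic_pt (th i)) = 1" for i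
    using tangent_at_polar(3)[OF nz neq[of "i - 1", symmetric] tangent[of "i - 1"]]
      tangent_at_polar(2)[OF nz neq[of i, symmetric] tangent[of i]] unfolding Q by simp_all
  ultimately have "P i = tangent_pt (th (i - 1)) (half_step_tan th i)"
      "P i = tangent_pt (th i) (- half_step_tan th i)" for i
    unfolding half_step_tan_def by (rule polar_both_eq_tangent_pt[OF sin_ne])+
  with Q step_lt that show ?thesis by blast
qed

end

section \<open>Orbits of the billiard map\<close>

locale caustic_orbit = caustic +
  fixes k :: real and th :: "int \<Rightarrow> real"
  assumes k_pos: "k > 0"
    and orbit_step: "\<And>i. th (i + 1) = next_angle k (th i)"
begin

lemma phase_orbit: "phase (th (i + int n)) = phase (th i) + real n * phase_shift k"
proof (induction n)
  case (Suc n)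
  have "th (i + int (Suc n)) = next_angle k (th (i + int n))"
    using orbit_step[of "i + int n"] by (simp add: algebra_simps)
  with Suc show ?case by (simp add: phase_next_angle[OF k_pos] algebra_simps)
qed simp

lemma orbit_shift:
  assumes "real n * phase_shift k = of_int j * phase_half_turn"
  shows "th (i + int n) = th i + of_int j * pi"
proof -
  have "phase (th (i + int n)) = phase (th i + of_int j * pi)"
    using phase_orbit[of i n] phase_add_int_pi[of "th i" j] assms by simp
  then show ?thesis unfolding phase_eq_iff .
qed

lemma lengths_shift:
  assumes "real n * phase_shift k = of_int j * phase_half_turn"
  shows "l_len th (i + int n) = l_len th i" "r_len th (i + int n) = r_len th i"
proof -
  have "th (i + int n - 1) = th ((i - 1) + int n)" by (simp add: algebra_simps)
  then have "th (i + int n - 1) = th (i - 1) + of_int j * pi" using orbit_shift[OF assms] by simp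
  moreover have "th (i + int n) = th i + of_int j * pi" using orbit_shift[OF assms] .
  ultimately show "l_len th (i + int n) = l_len th i" "r_len th (i + int n) = r_len th i"
    unfolding l_len_def r_len_def half_step_tan_def by (simp_all add: speed_int_pi_periodic)
qed

lemma orbit_closing:
  assumes "caustic_pt (th (int N)) = caustic_pt (th 0)"
  obtains m :: int where "real N * phase_shift k = of_int (2 * m) * phase_half_turn"
proof -
  have "cos (th (int N)) = cos (th 0)" "sin (th (int N)) = sin (th 0)"
    using assms ac_pos bc_pos unfolding caustic_pt_def by auto
  then obtain m :: int where "th (int N) = th 0 + 2 * pi * of_int m"
    using sin_cos_eq_iff by blast
  then have "th (0 + int N) = th 0 + of_int (2 * m) * pi" by (simp add: algebra_simps)
  then have "real N * phase_shift k = of_int (2 * m) * phase_half_turn"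
    using phase_orbit[of 0 N] phase_add_int_pi[of "th 0" "2 * m"] by simp
  then show ?thesis by (rule that)
qed

lemma lengths_half_period_even:
  assumes closing: "caustic_pt (th (int N)) = caustic_pt (th 0)" and N: "N = 2 * n"
  shows "r_len th (i + int n) = r_len th i" "l_len th (i + int n) = l_len th i"
proof -
  obtain m :: int where "real N * phase_shift k = of_int (2 * m) * phase_half_turn"
    using orbit_closing[OF closing] .
  then have "real n * phase_shift k = of_int m * phase_half_turn" using N by (simp add: algebra_simps)
  then show "r_len th (i + int n) = r_len th i" "l_len th (i + int n) = l_len th i"
    using lengths_shift by blast+
qed

text \<open>The angles \<open>th (i - 2) < th (i + n - 1) - m pi < th (i - 1) < th (i + n) - m pi\<close> are
  consecutive points of the orbit of a confocal ellipse with half the phase shift, and two steps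
  of that orbit combine by \<open>tan_half_two_steps\<close>.\<close>
lemma r_len_odd_shift:
  assumes ND: "real (2 * n + 1) * phase_shift k = of_int (2 * m) * phase_half_turn"
  shows "r_len th (i + int n) = l_len th (i - 1)"
proof -
  define D where "D = phase_shift k"
  obtain k' where k': "k' > 0" and half: "phase_shift k' = D / 2"
    using half_phase_shift_exists[OF k_pos] unfolding D_def .
  define b0 where "b0 = th (i - 2)"
  define b2 where "b2 = th (i - 1)"
  define c1 where "c1 = th (i + int n - 1) - of_int m * pi"
  define c3 where "c3 = th (i + int n) - of_int m * pi"
  have phase_minus: "phase (x - of_int m * pi) = phase x - of_int m * phase_half_turn" for x
    using phase_add_int_pi[of x "- m"] by simp
  have nD: "real n * D = of_int m * phase_half_turn - D / 2" using ND unfolding D_def by (simp add: algebra_simps)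
  have b2: "phase b2 = phase b0 + D"
    using phase_orbit[of "i - 2" 1] unfolding b0_def b2_def D_def by simp
  have c1: "phase c1 = phase b2 - D / 2"
    using phase_orbit[of "i - 1" n] nD unfolding c1_def b2_def phase_minus D_def by (simp add: algebra_simps)
  have c3: "phase c3 = phase c1 + D"
    using phase_orbit[of "i + int n - 1" 1] unfolding c1_def c3_def phase_minus D_def by simp
  have "phase c1 = phase b0 + phase_shift k'" "phase b2 = phase c1 + phase_shift k'"
    "phase c3 = phase b2 + phase_shift k'"
    using b2 c1 c3 unfolding half by simp_all
  then have steps: "c1 = next_angle k' b0" "b2 = next_angle k' c1" "c3 = next_angle k' b2"
    unfolding next_angle_iff_phase[OF k', symmetric] by simp_all
  have "b2 = next_angle k b0" "c3 = next_angle k c1"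
    using b2 c3 unfolding D_def next_angle_iff_phase[OF k_pos, symmetric] by simp_all
  then have "b2 - b0 < pi" "c3 - c1 < pi"
    using next_angle_bounds[OF k_pos, of b0] next_angle_bounds[OF k_pos, of c1] by simp_all
  then have tan_b: "tan ((b2 - b0) / 2) = 2 * (\<kappa> k' * speed c1) / (\<alpha> k' + \<beta> k' - 1)"
    and tan_c: "tan ((c3 - c1) / 2) = 2 * (\<kappa> k' * speed b2) / (\<alpha> k' + \<beta> k' - 1)"
    using tan_half_two_steps[OF k'] steps by blast+
  have "r_len th (i + int n) = tan ((c3 - c1) / 2) * speed c1"
    unfolding r_len_def half_step_tan_def c1_def c3_def
    using speed_int_pi_periodic[of _ "- m"] by simp
  also have "\<dots> = tan ((b2 - b0) / 2) * speed b2" unfolding tan_b tan_c by simp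
  also have "\<dots> = l_len th (i - 1)"
    unfolding l_len_def half_step_tan_def b0_def b2_def by (simp add: algebra_simps)
  finally show ?thesis .
qed

lemma lengths_half_period_odd:
  assumes closing: "caustic_pt (th (int N)) = caustic_pt (th 0)" and N: "N = 2 * n + 1"
  shows "r_len th (i + int n) = l_len th (i - 1)" "l_len th (i + int n) = r_len th i"
proof -
  obtain m :: int where m: "real N * phase_shift k = of_int (2 * m) * phase_half_turn"
    using orbit_closing[OF closing] .
  then have odd: "real (2 * n + 1) * phase_shift k = of_int (2 * m) * phase_half_turn" using N by simp
  then show "r_len th (i + int n) = l_len th (i - 1)" by (rule r_len_odd_shift)
  have "r_len th ((i + int n + 1) + int n) = l_len th (i + int n)"
    using r_len_odd_shift[OF odd, of "i + int n + 1"] by simp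
  moreover have "(i + int n + 1) + int n = i + int N" using N by simp
  moreover have "r_len th (i + int N) = r_len th i" using lengths_shift(2)[OF m] .
  ultimately show "l_len th (i + int n) = r_len th i" by simp
qed

end

context caustic
begin

lemma caustic_orbit_intro:
  assumes k: "k > 0" and step_lt: "\<And>i. \<bar>th i - th (i - 1)\<bar> < pi"
    and pos: "\<And>i. half_step_tan th i > 0"
    and on: "\<And>i. confocal k (tangent_pt (th i) (half_step_tan th (i + 1)))"
  shows "caustic_orbit ac bc k th"
proof (intro caustic_orbit.intro caustic_orbit_axioms.intro caustic_axioms k)
  fix i
  have lt: "\<bar>th (i + 1) - th i\<bar> < pi" using step_lt[of "i + 1"] by simp
  have "tan ((th (i + 1) - th i) / 2) > 0" using pos[of "i + 1"] unfolding half_step_tan_def by simp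
  then have "th i < th (i + 1)" using pos_if_tan_half_pos[of "th (i + 1) - th i"] lt by simp
  moreover have "th (i + 1) < th i + pi" using lt by simp
  ultimately show "th (i + 1) = next_angle k (th i)"
    using next_angle_unique[OF k] on[of i] unfolding half_step_tan_def by simp
qed

lemma billiard_distances:
  assumes k: "k > 0" and on: "\<And>i. confocal k (P i)" and neq: "\<And>i. P (i + 1) \<noteq> P i"
    and Q: "\<And>i. Q i = caustic_pt (th i)"
    and P_fwd: "\<And>i. P i = tangent_pt (th (i - 1)) (half_step_tan th i)"
    and P_bwd: "\<And>i. P i = tangent_pt (th i) (- half_step_tan th i)"
  shows "\<And>i. half_step_tan th i * half_step_tan th (i + 1) > 0"
    and "\<And>i. dist (P i) (Q i) = \<bar>half_step_tan th i\<bar> * speed (th i)"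
    and "\<And>i. dist (P i) (Q (i - 1)) = \<bar>half_step_tan th i\<bar> * speed (th (i - 1))"
    and "\<And>i. dist (P i) (P (i + 1)) = dist (P i) (Q i) + dist (P (i + 1)) (Q i)"
proof -
  note T_def = half_step_tan_def[of th, symmetric]
  have next_pt: "P (i + 1) = tangent_pt (th i) (half_step_tan th (i + 1))" for i
    using P_fwd[of "i + 1"] by simp
  show same_sign: "half_step_tan th i * half_step_tan th (i + 1) > 0" for i
  proof -
    have ne: "- half_step_tan th i \<noteq> half_step_tan th (i + 1)" using neq[of i] P_bwd[of i] next_pt[of i] by auto
    have "confocal k (tangent_pt (th i) (- half_step_tan th i))"
      and "confocal k (tangent_pt (th i) (half_step_tan th (i + 1)))"
      using on[of i] on[of "i + 1"] P_bwd[of i] next_pt[of i] by simp_all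
    from confocal_tangent_params_opposite[OF k this ne] show ?thesis by simp
  qed
  show l: "dist (P i) (Q i) = \<bar>half_step_tan th i\<bar> * speed (th i)" for i
    unfolding P_bwd[of i] Q caustic_pt_eq_tangent_pt dist_tangent_pt by simp
  show "dist (P i) (Q (i - 1)) = \<bar>half_step_tan th i\<bar> * speed (th (i - 1))" for i
    unfolding P_fwd[of i] Q caustic_pt_eq_tangent_pt dist_tangent_pt by simp
  show "dist (P i) (P (i + 1)) = dist (P i) (Q i) + dist (P (i + 1)) (Q i)" for i
  proof -
    have "dist (P (i + 1)) (Q i) = \<bar>half_step_tan th (i + 1)\<bar> * speed (th i)"
      unfolding next_pt Q caustic_pt_eq_tangent_pt dist_tangent_pt by simp
    moreover have "dist (P i) (P (i + 1)) = \<bar>- half_step_tan th i - half_step_tan th (i + 1)\<bar> * speed (th i)"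
      using P_bwd[of i] next_pt[of i] dist_tangent_pt by simp
    moreover have "\<bar>- half_step_tan th i - half_step_tan th (i + 1)\<bar>
        = \<bar>half_step_tan th i\<bar> + \<bar>half_step_tan th (i + 1)\<bar>"
      using same_sign[of i] by (auto simp: zero_less_mult_iff)
    ultimately show ?thesis using l[of i] by (simp add: algebra_simps)
  qed
qed

text \<open>Reversing the orientation of the angles if necessary, the billiard is an orbit of
  \<open>next_angle k\<close>.\<close>
lemma billiard_orbit_exists:
  assumes k: "k > 0" and on: "\<And>i. confocal k (P i)" and neq: "\<And>i. P (i + 1) \<noteq> P i"
    and lines: "\<And>i. line_through (P (i - 1)) (P i) \<noteq> line_through (P i) (P (i + 1))"
    and tangent: "\<And>i. tangent_at ac bc (line_through (P i) (P (i + 1))) (Q i)"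
    and closed: "Q (int N) = Q 0"
  obtains th where "caustic_orbit ac bc k th" "caustic_pt (th (int N)) = caustic_pt (th 0)"
    "\<And>i. dist (P i) (Q i) = l_len th i" "\<And>i. dist (P i) (Q (i - 1)) = r_len th i"
    "\<And>i. dist (P i) (P (i + 1)) = dist (P i) (Q i) + dist (P (i + 1)) (Q i)"
proof -
  obtain th where Q: "\<And>i. Q i = caustic_pt (th i)" and step_lt: "\<And>i. \<bar>th i - th (i - 1)\<bar> < pi"
    and P_fwd: "\<And>i. P i = tangent_pt (th (i - 1)) (half_step_tan th i)"
    and P_bwd: "\<And>i. P i = tangent_pt (th i) (- half_step_tan th i)"
    using contact_angles[OF neq lines tangent] by blast
  note dists = billiard_distances[OF k on neq Q P_fwd P_bwd]
  obtain th' where orient: "th' = th \<or> th' = (\<lambda>i. - th i)" and pos: "\<And>i. half_step_tan th' i > 0"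
    using int_sign_constant[of "half_step_tan th", OF dists(1)] half_step_tan_minus[of th] by fastforce
  have abs_T: "\<bar>half_step_tan th i\<bar> = half_step_tan th' i" and speed': "speed (th' i) = speed (th i)" for i
    using orient pos[of i] by (auto simp: half_step_tan_minus speed_minus)
  have "confocal k (tangent_pt (th' i) (half_step_tan th' (i + 1)))" for i
    using orient on[of "i + 1"] P_fwd[of "i + 1"]
    by (auto simp: half_step_tan_minus tangent_pt_minus confocal_reflect)
  moreover have "\<bar>th' i - th' (i - 1)\<bar> < pi" for i using orient step_lt[of i] by auto
  ultimately have "caustic_orbit ac bc k th'" using caustic_orbit_intro[OF k _ pos] by blast
  moreover have "caustic_pt (th' (int N)) = caustic_pt (th' 0)"
    using orient closed unfolding Q by (auto simp: caustic_pt_minus)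
  moreover have "dist (P i) (Q i) = l_len th' i" "dist (P i) (Q (i - 1)) = r_len th' i" for i
    unfolding dists(2,3) l_len_def r_len_def abs_T speed'[of i] speed'[of "i - 1"] by simp_all
  ultimately show ?thesis using that dists(4) by blast
qed

end

theorem theorem4p5:
  fixes ac bc ke ae be :: real and P Q :: "int \<Rightarrow> real \<times> real" and N :: nat
    and l r :: "int \<Rightarrow> real"
  assumes "ac > bc" and "bc > 0" and "ke > 0"
    and "ae > 0" and "be > 0"
    and "ae^2 = ac^2 + ke" and "be^2 = bc^2 + ke"
    and "periodic_billiard ae be ac bc P N"
    and "\<And>i. tangent_at ac bc (line_through (P i) (P (i + 1))) (Q i)"
    and "\<And>i. l i = dist (P i) (Q i)"
    and "\<And>i. r i = dist (P i) (Q (i - 1))"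
  shows "(\<forall>n. N = 2 * n \<longrightarrow> (\<forall>i. r (i + int n) = r i \<and> l (i + int n) = l i)) \<and>
         (\<forall>n. N = 2 * n + 1 \<longrightarrow>
            (\<forall>i. r (i + int n) = l (i - 1) \<and> l (i + int n) = r i) \<and>
            (\<Sum>i=1..int N. l i) = (\<Sum>i=1..int N. dist (P i) (P (i + 1))) / 2 \<and>
            (\<Sum>i=1..int N. r i) = (\<Sum>i=1..int N. dist (P i) (P (i + 1))) / 2)"
proof -
  interpret caustic ac bc using assms(1,2) by unfold_locales
  have "on_ellipse ae be X \<longleftrightarrow> confocal ke X" for X
    unfolding on_ellipse_def confocal_def assms(6,7) ..
  with assms(8) have on: "\<And>i. confocal ke (P i)" and neq: "\<And>i. P (i + 1) \<noteq> P i"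
    and lines: "\<And>i. line_through (P (i - 1)) (P i) \<noteq> line_through (P i) (P (i + 1))"
    and P_periodic: "\<And>i. P (i + int N) = P i"
    unfolding periodic_billiard_def billiard_def by auto
  have Q_periodic: "\<And>i. Q (i + int N) = Q i" using tangent_point_periodic[OF P_periodic assms(9)] .
  obtain th where "caustic_orbit ac bc ke th" and closing: "caustic_pt (th (int N)) = caustic_pt (th 0)"
    and l: "\<And>i. l i = l_len th i" and r: "\<And>i. r i = r_len th i"
    and perimeter: "\<And>i. dist (P i) (P (i + 1)) = l i + r (i + 1)"
    using billiard_orbit_exists[OF assms(3) on neq lines assms(9), of N] Q_periodic[of 0]
    unfolding assms(10,11) by (auto simp: add.commute)
  then interpret caustic_orbit ac bc ke th by simp
  have l_periodic: "l (i + int N) = l i" and r_periodic: "r (i + int N) = r i" for i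
    unfolding assms(10,11) using P_periodic Q_periodic[of i] Q_periodic[of "i - 1"] by (simp_all add: algebra_simps)
  have "r (i + int n) = r i \<and> l (i + int n) = l i" if "N = 2 * n" for n i
    unfolding l r using lengths_half_period_even[OF closing that] by blast
  moreover have "(\<forall>i. r (i + int n) = l (i - 1) \<and> l (i + int n) = r i) \<and>
      (\<Sum>i=1..int N. l i) = (\<Sum>i=1..int N. dist (P i) (P (i + 1))) / 2 \<and>
      (\<Sum>i=1..int N. r i) = (\<Sum>i=1..int N. dist (P i) (P (i + 1))) / 2" if "N = 2 * n + 1" for n
  proof -
    have shift: "r (i + int n) = l (i - 1)" "l (i + int n) = r i" for i
      unfolding l r using lengths_half_period_odd[OF closing that] by simp_all
    with periodic_sums_half_total[OF l_periodic r_periodic shift(1) perimeter] show ?thesis by simp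
  qed
  ultimately show ?thesis by blast
qed

end
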